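(* (a) Let $n\ge1$ and $x\in\overline{L_n}$. Then there are ultrafilters $x_i\in\overline{L_i}$, $1\le i\le n-1$, such that $1\,\tilde{\mid}\,x_1\,\tilde{\mid}\,x_2\cdots\tilde{\mid}\,x_{n-1}\,\tilde{\mid}\,x$. (b) For any ultrafilter $x_m\in\overline{L_m}$ there exists a sequence $\langle x_n: n\ge m\rangle$ with $x_n\in\overline{L_n}$ such that $x_m\,\tilde{\mid}\,x_n$ for all $n\ge m$.
   Context: $\mathbb{N}=\{1,2,3,\dots\}$; $\beta\mathbb{N}$ is the set of ultrafilters on $\mathbb{N}$ (Stone–Čech compactification, naturals identified with principal ultrafilters). For $A\subseteq\mathbb{N}$, $\overline{A}=\{x\in\beta\mathbb{N}:A\in x\}$. $P$ is the set of primes, $L_0=\{1\}$, $L_n=\{a_1\cdots a_n:a_i\in P\}$. For $x,y\in\beta\mathbb{N}$, $x\,\tilde{\mid}\,y$ iff for every $A\in x$ the set $\{k\in\mathbb{N}:\exists a\in A,\ a\mid k\}$ belongs to $y$. *)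

theory Defs
  imports "HOL-Computational_Algebra.Primes"
begin

text \<open>The paper's naturals N = {1,2,3,...}, as a subset of nat.\<close>
definition PosNat :: "nat set" where
  "PosNat = {k. k \<ge> 1}"

text \<open>Ultrafilters on N (points of beta N), represented as families of subsets of N.\<close>
definition ultrafilter_N :: "nat set set \<Rightarrow> bool" where
  "ultrafilter_N U \<longleftrightarrow>
     U \<subseteq> Pow PosNat \<and> PosNat \<in> U \<and> {} \<notin> U \<and>
     (\<forall>A\<in>U. \<forall>B\<in>U. A \<inter> B \<in> U) \<and>
     (\<forall>A\<in>U. \<forall>B. A \<subseteq> B \<and> B \<subseteq> PosNat \<longrightarrow> B \<in> U) \<and>
     (\<forall>A. A \<subseteq> PosNat \<longrightarrow> A \<in> U \<or> PosNat - A \<in> U)"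

text \<open>The principal ultrafilter at n (identification of n with a point of beta N).\<close>
definition principal_N :: "nat \<Rightarrow> nat set set" where
  "principal_N n = {A. A \<subseteq> PosNat \<and> n \<in> A}"

definition Lev :: "nat \<Rightarrow> nat set" where
  "Lev n = {prod_list xs | xs. length xs = n \<and> (\<forall>p\<in>set xs. prime p)}"

definition tdvd :: "nat set set \<Rightarrow> nat set set \<Rightarrow> bool" where
  "tdvd x y \<longleftrightarrow> (\<forall>A\<in>x. {k\<in>PosNat. \<exists>a\<in>A. a dvd k} \<in> y)"

end

theory Submission
  imports Defs
begin

text \<open>If \<open>f a\<close> divides \<open>g a\<close> for every \<open>a\<close>, then the images of any ultrafilter \<open>x\<close> under
  \<open>\<beta>f\<close> and \<open>\<beta>g\<close> satisfy \<open>\<beta>f x ~| \<beta>g x\<close>. Part (a): for \<open>x\<close> on \<open>L\<^sub>n\<close>, let \<open>d\<close> divide a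
  number by one of its prime factors; the images of \<open>x\<close> under \<open>d\<^sup>n\<^sup>-\<^sup>i\<close> live on \<open>L\<^sub>i\<close> and form a
  \<open>~|\<close>-chain, starting at the principal ultrafilter at 1 since \<open>L\<^sub>0 = {1}\<close>. Part (b): the
  images of \<open>x\<^sub>m\<close> under \<open>k \<mapsto> k 2\<^sup>n\<^sup>-\<^sup>m\<close> live on \<open>L\<^sub>n\<close>.\<close>

definition image_ultrafilter :: "(nat \<Rightarrow> nat) \<Rightarrow> nat set set \<Rightarrow> nat set set" where
  "image_ultrafilter f U = {B. B \<subseteq> PosNat \<and> {a\<in>PosNat. f a \<in> B} \<in> U}"

lemma ultrafilter_N_mono:
  "ultrafilter_N U \<Longrightarrow> A \<in> U \<Longrightarrow> A \<subseteq> B \<Longrightarrow> B \<subseteq> PosNat \<Longrightarrow> B \<in> U"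
  unfolding ultrafilter_N_def by blast

lemma ultrafilter_N_image:
  assumes U: "ultrafilter_N U" and f: "\<And>a. a \<in> PosNat \<Longrightarrow> f a \<in> PosNat"
  shows "ultrafilter_N (image_ultrafilter f U)"
proof -
  let ?P = "\<lambda>B. {a\<in>PosNat. f a \<in> B}"
  let ?V = "image_ultrafilter f U"
  have V_iff: "B \<in> ?V \<longleftrightarrow> B \<subseteq> PosNat \<and> ?P B \<in> U" for B
    unfolding image_ultrafilter_def by simp
  have U_Int: "A \<in> U \<Longrightarrow> B \<in> U \<Longrightarrow> A \<inter> B \<in> U" for A B
    using U unfolding ultrafilter_N_def by blast
  have U_compl: "A \<subseteq> PosNat \<Longrightarrow> A \<in> U \<or> PosNat - A \<in> U" for A
    using U unfolding ultrafilter_N_def by blast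
  have "?P PosNat = PosNat" and P_diff: "?P (PosNat - A) = PosNat - ?P A" for A
    using f by auto
  then have "PosNat \<in> ?V"
    using U V_iff unfolding ultrafilter_N_def by auto
  moreover have "{} \<notin> ?V"
    using U V_iff unfolding ultrafilter_N_def by auto
  moreover have "A \<inter> B \<in> ?V" if "A \<in> ?V" "B \<in> ?V" for A B
  proof -
    have "?P (A \<inter> B) = ?P A \<inter> ?P B"
      by auto
    then show ?thesis
      using that U_Int V_iff by auto
  qed
  moreover have "B \<in> ?V" if "A \<in> ?V" "A \<subseteq> B" "B \<subseteq> PosNat" for A B
    using that ultrafilter_N_mono[OF U, of "?P A" "?P B"] V_iff by auto
  moreover have "A \<in> ?V \<or> PosNat - A \<in> ?V" if "A \<subseteq> PosNat" for A
    using that U_compl[of "?P A"] P_diff[of A] V_iff by auto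
  ultimately show ?thesis
    unfolding ultrafilter_N_def by (auto simp: V_iff)
qed

lemma image_ultrafilter_cong_id:
  assumes U: "ultrafilter_N U" and f: "\<And>a. a \<in> PosNat \<Longrightarrow> f a = a"
  shows "image_ultrafilter f U = U"
proof -
  have "{a\<in>PosNat. f a \<in> B} = B" if "B \<subseteq> PosNat" for B
    using that f by auto
  moreover have "U \<subseteq> Pow PosNat"
    using U unfolding ultrafilter_N_def by auto
  ultimately show ?thesis
    unfolding image_ultrafilter_def by auto
qed

lemma image_ultrafilterI:
  assumes "ultrafilter_N U" "A \<in> U" "\<And>a. a \<in> A \<Longrightarrow> f a \<in> B" "B \<subseteq> PosNat"
  shows "B \<in> image_ultrafilter f U"
proof -
  have "A \<subseteq> PosNat"
    using assms(1,2) unfolding ultrafilter_N_def by auto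
  then have "A \<subseteq> {a\<in>PosNat. f a \<in> B}"
    using assms(3) by auto
  then show ?thesis
    using ultrafilter_N_mono[OF assms(1,2)] assms(4) unfolding image_ultrafilter_def by auto
qed

lemma tdvd_image_ultrafilter:
  assumes U: "ultrafilter_N U"
    and g: "\<And>a. a \<in> PosNat \<Longrightarrow> g a \<in> PosNat"
    and fg: "\<And>a. a \<in> PosNat \<Longrightarrow> f a dvd g a"
  shows "tdvd (image_ultrafilter f U) (image_ultrafilter g U)"
  unfolding tdvd_def
proof
  fix A assume "A \<in> image_ultrafilter f U"
  then have "{a\<in>PosNat. f a \<in> A} \<in> U"
    unfolding image_ultrafilter_def by auto
  then show "{k\<in>PosNat. \<exists>a\<in>A. a dvd k} \<in> image_ultrafilter g U"
    by (rule image_ultrafilterI[OF U]) (use g fg in auto)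
qed

lemma ultrafilter_N_eq_principal:
  assumes U: "ultrafilter_N U" and "{k} \<in> U"
  shows "U = principal_N k"
proof
  show "U \<subseteq> principal_N k"
  proof
    fix B assume "B \<in> U"
    then have "B \<inter> {k} \<in> U" and "B \<subseteq> PosNat"
      using U \<open>{k} \<in> U\<close> unfolding ultrafilter_N_def by auto
    then show "B \<in> principal_N k"
      using U unfolding principal_N_def ultrafilter_N_def by (cases "k \<in> B") auto
  qed
  show "principal_N k \<subseteq> U"
    using ultrafilter_N_mono[OF U \<open>{k} \<in> U\<close>] unfolding principal_N_def by auto
qed

lemma PosNat_dvd: "k \<in> PosNat \<Longrightarrow> a dvd k \<Longrightarrow> a \<in> PosNat"
  unfolding PosNat_def by (auto simp: Suc_le_eq)

lemma Lev_subset_PosNat: "Lev n \<subseteq> PosNat"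
proof
  fix k assume "k \<in> Lev n"
  then obtain xs where "k = prod_list xs" "\<forall>p\<in>set xs. prime p"
    unfolding Lev_def by auto
  moreover have "prod_list xs \<noteq> 0" if "\<forall>p\<in>set xs. prime p" for xs :: "nat list"
    using that by (induction xs) (auto simp: prime_gt_0_nat)
  ultimately show "k \<in> PosNat"
    unfolding PosNat_def by (simp add: Suc_le_eq)
qed

lemma Lev_0: "Lev 0 = {1}"
  unfolding Lev_def by auto

lemma Lev_mult:
  assumes "k \<in> Lev m" "l \<in> Lev n"
  shows "k * l \<in> Lev (m + n)"
proof -
  obtain xs ys where "k = prod_list xs" "length xs = m" "\<forall>p\<in>set xs. prime p"
    "l = prod_list ys" "length ys = n" "\<forall>p\<in>set ys. prime p"
    using assms unfolding Lev_def by auto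
  then show ?thesis
    unfolding Lev_def by (auto intro!: exI[of _ "xs @ ys"])
qed

lemma prime_power_in_Lev: "prime p \<Longrightarrow> p ^ d \<in> Lev d"
  unfolding Lev_def by (force intro!: exI[of _ "replicate d p"] simp: prod_list_replicate)

lemma prod_list_remove1: "(p::nat) \<in> set xs \<Longrightarrow> prod_list xs = p * prod_list (remove1 p xs)"
  by (induction xs) auto

lemma prime_dvd_prod_list_mem:
  "prime (p::nat) \<Longrightarrow> \<forall>q\<in>set xs. prime q \<Longrightarrow> p dvd prod_list xs \<Longrightarrow> p \<in> set xs"
  by (induction xs) (auto simp: prime_dvd_mult_iff primes_dvd_imp_eq)

lemma Lev_Suc_div_prime:
  assumes "k \<in> Lev (Suc j)" "prime p" "p dvd k"
  shows "k div p \<in> Lev j"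
proof -
  obtain xs where xs: "k = prod_list xs" "length xs = Suc j" "\<forall>q\<in>set xs. prime q"
    using assms(1) unfolding Lev_def by auto
  have p: "p \<in> set xs"
    using prime_dvd_prod_list_mem[OF assms(2) xs(3)] assms(3) xs(1) by simp
  have "k div p = prod_list (remove1 p xs)"
    using xs(1) prod_list_remove1[OF p] assms(2) prime_gt_0_nat by simp
  moreover have "length (remove1 p xs) = j"
    using p xs(2) by (simp add: length_remove1)
  moreover have "\<forall>q\<in>set (remove1 p xs). prime q"
    using xs(3) set_remove1_subset[of p xs] by blast
  ultimately show ?thesis
    unfolding Lev_def by blast
qed

text \<open>Which prime factor is divided off is irrelevant; \<open>1\<close>, having none, is fixed.\<close>
definition drop_prime_factor :: "nat \<Rightarrow> nat" where
  "drop_prime_factor k =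
     (if \<exists>p. prime p \<and> p dvd k then k div (SOME p. prime p \<and> p dvd k) else k)"

lemma drop_prime_factor_dvd: "drop_prime_factor k dvd k"
proof (cases "\<exists>p. prime p \<and> p dvd k")
  case True
  then have "k = (SOME p. prime p \<and> p dvd k) * drop_prime_factor k"
    unfolding drop_prime_factor_def using someI_ex[OF True] by simp
  then show ?thesis
    by (metis dvd_triv_right)
qed (auto simp: drop_prime_factor_def)

lemma drop_prime_factor_Lev:
  assumes "k \<in> Lev (Suc j)"
  shows "drop_prime_factor k \<in> Lev j"
proof -
  obtain xs where "k = prod_list xs" "length xs = Suc j" "\<forall>q\<in>set xs. prime q"
    using assms unfolding Lev_def by auto
  then have ex: "\<exists>p. prime p \<and> p dvd k"
    by (cases xs) auto
  then show ?thesis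
    using Lev_Suc_div_prime[OF assms] someI_ex[OF ex] unfolding drop_prime_factor_def by auto
qed

lemma funpow_drop_prime_factor_dvd: "(drop_prime_factor ^^ d) k dvd k"
  by (induction d) (auto intro: dvd_trans[OF drop_prime_factor_dvd])

lemma funpow_drop_prime_factor_Lev:
  "k \<in> Lev (i + d) \<Longrightarrow> (drop_prime_factor ^^ d) k \<in> Lev i"
  by (induction d arbitrary: i) (auto intro: drop_prime_factor_Lev)

lemma tdvd_chain_from_principal_1:
  assumes x: "ultrafilter_N x" and L: "Lev n \<in> x"
  shows "\<exists>xs :: nat \<Rightarrow> nat set set.
          xs 0 = principal_N 1 \<and> xs n = x \<and>
          (\<forall>i. 1 \<le> i \<and> i \<le> n - 1 \<longrightarrow> ultrafilter_N (xs i) \<and> Lev i \<in> xs i) \<and>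
          (\<forall>i<n. tdvd (xs i) (xs (Suc i)))"
proof -
  define xs where "xs i = image_ultrafilter (drop_prime_factor ^^ (n - i)) x" for i
  have pos: "(drop_prime_factor ^^ d) a \<in> PosNat" if "a \<in> PosNat" for a d
    using PosNat_dvd[OF that funpow_drop_prime_factor_dvd] .
  have uf: "ultrafilter_N (xs i)" for i
    unfolding xs_def by (rule ultrafilter_N_image[OF x pos])
  have Lev_in: "Lev i \<in> xs i" if "i \<le> n" for i
    unfolding xs_def
    by (rule image_ultrafilterI[OF x L _ Lev_subset_PosNat])
      (use that funpow_drop_prime_factor_Lev[of _ i "n - i"] in auto)
  have "xs 0 = principal_N 1"
    using ultrafilter_N_eq_principal[OF uf] Lev_in[of 0] Lev_0 by simp
  moreover have "xs n = x"
    unfolding xs_def using image_ultrafilter_cong_id[OF x] by simp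
  moreover have "tdvd (xs i) (xs (Suc i))" if "i < n" for i
  proof -
    have "n - i = Suc (n - Suc i)"
      using that by simp
    then have dvd: "(drop_prime_factor ^^ (n - i)) a dvd (drop_prime_factor ^^ (n - Suc i)) a" for a
      by (simp add: drop_prime_factor_dvd)
    show ?thesis
      unfolding xs_def using x pos dvd by (rule tdvd_image_ultrafilter)
  qed
  ultimately show ?thesis
    using uf Lev_in by (intro exI[of _ xs]) auto
qed

lemma tdvd_sequence_upward:
  assumes x: "ultrafilter_N xm" and L: "Lev m \<in> xm"
  shows "\<exists>xs :: nat \<Rightarrow> nat set set.
          xs m = xm \<and>
          (\<forall>n\<ge>m. ultrafilter_N (xs n) \<and> Lev n \<in> xs n \<and> tdvd xm (xs n))"
proof -
  define xs where "xs n = image_ultrafilter (\<lambda>a. a * 2 ^ (n - m)) xm" for n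
  have pos: "a * 2 ^ (n - m) \<in> PosNat" if "a \<in> PosNat" for a n :: nat
    using that unfolding PosNat_def by auto
  have uf: "ultrafilter_N (xs n)" for n
    unfolding xs_def by (rule ultrafilter_N_image[OF x pos])
  have Lev_in: "Lev n \<in> xs n" if "m \<le> n" for n
    unfolding xs_def
    by (rule image_ultrafilterI[OF x L _ Lev_subset_PosNat])
      (use that Lev_mult[OF _ prime_power_in_Lev[OF two_is_prime_nat], of _ m "n - m"] in simp)
  have "xs m = xm"
    unfolding xs_def using image_ultrafilter_cong_id[OF x] by simp
  moreover have "tdvd xm (xs n)" for n
    using tdvd_image_ultrafilter[OF x pos, where f = id] image_ultrafilter_cong_id[OF x, of id]
    unfolding xs_def by simp
  ultimately show ?thesis
    using uf Lev_in by (intro exI[of _ xs]) auto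
qed

theorem corollary2p15:
  shows
  "(\<forall>n x. n \<ge> 1 \<and> ultrafilter_N x \<and> Lev n \<in> x \<longrightarrow>
      (\<exists>xs :: nat \<Rightarrow> nat set set.
          xs 0 = principal_N 1 \<and> xs n = x \<and>
          (\<forall>i. 1 \<le> i \<and> i \<le> n - 1 \<longrightarrow> ultrafilter_N (xs i) \<and> Lev i \<in> xs i) \<and>
          (\<forall>i<n. tdvd (xs i) (xs (Suc i)))))
   \<and>
   (\<forall>m xm. ultrafilter_N xm \<and> Lev m \<in> xm \<longrightarrow>
      (\<exists>xs :: nat \<Rightarrow> nat set set.
          xs m = xm \<and>
          (\<forall>n\<ge>m. ultrafilter_N (xs n) \<and> Lev n \<in> xs n \<and> tdvd xm (xs n))))"
  by (intro conjI allI impI; elim conjE)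
    (assumption | rule tdvd_chain_from_principal_1 tdvd_sequence_upward)+

end
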